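(* Let $X$ be a bounded anti-linear operator on $H^2(\mathbb{D})$, let $S\in\mathcal{B}(H^2(\mathbb{D}))$ be a unilateral shift, and let $U$ be a unitary on $H^2(\mathbb{D})$ with $S=U^*M_zU$ (e.g. $Uf_n=z^n$ where $\{f_n\}$ is an orthonormal basis with $Sf_n=f_{n+1}$). Then $XM_z=SX$ if and only if there exists $\theta\in H^\infty(\mathbb{D})$ such that $X=U^*M_\theta J_{H^2(\mathbb{D})}$.
   Context: $H^2(\mathbb{D})$ is the Hardy space of the unit disc; $M_z$, $M_\theta$ are multiplication operators; $H^\infty(\mathbb{D})$ is the algebra of bounded analytic functions; $J_{H^2(\mathbb{D})}(\sum a_nz^n)=\sum\bar a_nz^n$. A unilateral shift on $H^2(\mathbb{D})$ is an operator $S$ for which there is an orthonormal basis $\{f_n\}_{n\in\mathbb{Z}_+}$ with $Sf_n=f_{n+1}$ for all $n$. *)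

theory Defs
  imports "HOL-Complex_Analysis.Complex_Analysis"
begin

text \<open>H^2(D) is modelled by Taylor coefficient sequences: f = sum a_n z^n with
  sum |a_n|^2 finite.\<close>

definition H2 :: "(nat \<Rightarrow> complex) set" where
  "H2 = {a. summable (\<lambda>n. (cmod (a n))\<^sup>2)}"

definition h2_inner :: "(nat \<Rightarrow> complex) \<Rightarrow> (nat \<Rightarrow> complex) \<Rightarrow> complex" where
  "h2_inner a b = (\<Sum>n. a n * cnj (b n))"

definition h2_norm :: "(nat \<Rightarrow> complex) \<Rightarrow> real" where
  "h2_norm a = sqrt (\<Sum>n. (cmod (a n))\<^sup>2)"

definition bounded_linear_h2 :: "((nat \<Rightarrow> complex) \<Rightarrow> (nat \<Rightarrow> complex)) \<Rightarrow> bool" where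
  "bounded_linear_h2 T \<longleftrightarrow>
     (\<forall>a\<in>H2. T a \<in> H2) \<and>
     (\<forall>a\<in>H2. \<forall>b\<in>H2. T (\<lambda>n. a n + b n) = (\<lambda>n. T a n + T b n)) \<and>
     (\<forall>a\<in>H2. \<forall>c. T (\<lambda>n. c * a n) = (\<lambda>n. c * T a n)) \<and>
     (\<exists>K. \<forall>a\<in>H2. h2_norm (T a) \<le> K * h2_norm a)"

definition bounded_antilinear_h2 :: "((nat \<Rightarrow> complex) \<Rightarrow> (nat \<Rightarrow> complex)) \<Rightarrow> bool" where
  "bounded_antilinear_h2 T \<longleftrightarrow>
     (\<forall>a\<in>H2. T a \<in> H2) \<and>
     (\<forall>a\<in>H2. \<forall>b\<in>H2. T (\<lambda>n. a n + b n) = (\<lambda>n. T a n + T b n)) \<and>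
     (\<forall>a\<in>H2. \<forall>c. T (\<lambda>n. c * a n) = (\<lambda>n. cnj c * T a n)) \<and>
     (\<exists>K. \<forall>a\<in>H2. h2_norm (T a) \<le> K * h2_norm a)"

definition h2_adjoint :: "((nat \<Rightarrow> complex) \<Rightarrow> (nat \<Rightarrow> complex)) \<Rightarrow> (nat \<Rightarrow> complex) \<Rightarrow> (nat \<Rightarrow> complex)" where
  "h2_adjoint T b = (THE c. c \<in> H2 \<and> (\<forall>a\<in>H2. h2_inner (T a) b = h2_inner a c))"

definition unitary_h2 :: "((nat \<Rightarrow> complex) \<Rightarrow> (nat \<Rightarrow> complex)) \<Rightarrow> bool" where
  "unitary_h2 U \<longleftrightarrow> bounded_linear_h2 U \<and>
     (\<forall>a\<in>H2. h2_adjoint U (U a) = a) \<and> (\<forall>a\<in>H2. U (h2_adjoint U a) = a)"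

text \<open>Multiplication by z: shift of Taylor coefficients.\<close>
definition Mz :: "(nat \<Rightarrow> complex) \<Rightarrow> (nat \<Rightarrow> complex)" where
  "Mz a = (\<lambda>n. if n = 0 then 0 else a (n - 1))"

definition J_H2 :: "(nat \<Rightarrow> complex) \<Rightarrow> (nat \<Rightarrow> complex)" where
  "J_H2 a = (\<lambda>n. cnj (a n))"

definition H_infty :: "(complex \<Rightarrow> complex) set" where
  "H_infty = {\<theta>. \<theta> holomorphic_on ball 0 1 \<and> bounded (\<theta> ` ball 0 1)}"

definition taylor_coeff :: "(complex \<Rightarrow> complex) \<Rightarrow> nat \<Rightarrow> complex" where
  "taylor_coeff \<theta> k = (deriv ^^ k) \<theta> 0 / fact k"

text \<open>Multiplication by theta: Cauchy product of Taylor coefficients.\<close>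
definition M_theta :: "(complex \<Rightarrow> complex) \<Rightarrow> (nat \<Rightarrow> complex) \<Rightarrow> (nat \<Rightarrow> complex)" where
  "M_theta \<theta> a = (\<lambda>n. \<Sum>k\<le>n. taylor_coeff \<theta> k * a (n - k))"

definition unilateral_shift_h2 :: "((nat \<Rightarrow> complex) \<Rightarrow> (nat \<Rightarrow> complex)) \<Rightarrow> bool" where
  "unilateral_shift_h2 S \<longleftrightarrow> bounded_linear_h2 S \<and>
     (\<exists>f :: nat \<Rightarrow> (nat \<Rightarrow> complex).
        (\<forall>n. f n \<in> H2) \<and>
        (\<forall>m n. h2_inner (f m) (f n) = (if m = n then 1 else 0)) \<and>
        (\<forall>a\<in>H2. (\<forall>n. h2_inner a (f n) = 0) \<longrightarrow> a = (\<lambda>_. 0)) \<and>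
        (\<forall>n. S (f n) = f (Suc n)))"

end

theory Submission
  imports Defs
begin

text \<open>
  Conjugating by \<open>J\<close> and \<open>U\<close> turns the anti-linear \<open>X\<close> into the linear operator
  \<open>Y = U X J\<close>, and \<open>X M\<^sub>z = S X\<close> becomes \<open>Y M\<^sub>z = M\<^sub>z Y\<close>.  A bounded operator commuting
  with \<open>M\<^sub>z\<close> is convolution with the coefficient sequence \<open>t = Y 1\<close>, since the first
  \<open>n + 1\<close> coefficients of \<open>Y a\<close> only see the first \<open>n + 1\<close> coefficients of \<open>a\<close>.
  Testing \<open>Y\<close> on the Szego kernel \<open>k\<^sub>z\<close> with coefficients \<open>cnj z ^ n\<close> (so that
  \<open>k\<^sub>z(z) = \<parallel>k\<^sub>z\<parallel>\<^sup>2\<close>) shows that the power series \<open>\<theta>\<close> of \<open>t\<close> is bounded by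
  \<open>\<parallel>Y\<parallel>\<close> on the disc, so \<open>Y = M\<^sub>\<theta>\<close> with \<open>\<theta> \<in> H\<^sup>\<infinity>\<close>.

  Conversely \<open>M\<^sub>\<theta>\<close> is bounded on \<open>H\<^sup>2\<close> for \<open>\<theta> \<in> H\<^sup>\<infinity>\<close>.  For a polynomial \<open>\<phi>\<close> and a
  finite sequence \<open>p\<close>, the discrete Parseval identity at the \<open>L\<close>-th roots of unity
  (with \<open>L\<close> larger than the degree of \<open>\<phi> p\<close>) gives \<open>\<parallel>\<phi> p\<parallel> \<le> B \<parallel>p\<parallel>\<close> whenever
  \<open>|\<phi>| \<le> B\<close> on the unit circle.  Applying this to truncations of the dilates
  \<open>\<theta>(r \<cdot>)\<close> and letting first the degree grow and then \<open>r \<rightarrow> 1\<close> yields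
  \<open>\<parallel>M\<^sub>\<theta> a\<parallel> \<le> sup |\<theta>| \<parallel>a\<parallel>\<close>.
\<close>

section \<open>Square-summable coefficient sequences\<close>

lemma H2_add:
  assumes "a \<in> H2" "b \<in> H2"
  shows "(\<lambda>n. a n + b n) \<in> H2"
proof -
  have bound: "norm ((cmod (a n + b n))\<^sup>2) \<le> 2 * (cmod (a n))\<^sup>2 + 2 * (cmod (b n))\<^sup>2" for n
  proof -
    have "(cmod (a n + b n))\<^sup>2 \<le> (cmod (a n) + cmod (b n))\<^sup>2"
      using norm_triangle_ineq[of "a n" "b n"] by (simp add: power_mono)
    also have "\<dots> \<le> 2 * (cmod (a n))\<^sup>2 + 2 * (cmod (b n))\<^sup>2"
      using sum_squares_bound[of "cmod (a n)" "cmod (b n)"] unfolding power2_sum by linarith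
    finally show ?thesis by simp
  qed
  have "summable (\<lambda>n. 2 * (cmod (a n))\<^sup>2 + 2 * (cmod (b n))\<^sup>2)"
    using assms unfolding H2_def by (intro summable_add summable_mult) auto
  then show ?thesis
    unfolding H2_def mem_Collect_eq using bound by (rule summable_comparison_test')
qed

lemma H2_cmult: "a \<in> H2 \<Longrightarrow> (\<lambda>n. c * a n) \<in> H2"
  using summable_mult[of "\<lambda>n. (cmod (a n))\<^sup>2" "(cmod c)\<^sup>2"]
  by (simp add: H2_def norm_mult power_mult_distrib)

lemma H2_zero: "(\<lambda>n. 0) \<in> H2"
  by (simp add: H2_def)

lemma H2_finite_support: "(\<And>n. N < n \<Longrightarrow> a n = 0) \<Longrightarrow> a \<in> H2"
  unfolding H2_def mem_Collect_eq by (rule sums_summable[OF sums_finite[of "{..N}"]]) auto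

lemma H2_shift: "a \<in> H2 \<Longrightarrow> (\<lambda>n. a (n + k)) \<in> H2"
  unfolding H2_def using summable_iff_shift[of "\<lambda>n. (cmod (a n))\<^sup>2" k] by simp

lemma Mz_H2: "a \<in> H2 \<Longrightarrow> Mz a \<in> H2"
  unfolding H2_def using summable_Suc_iff[of "\<lambda>n. (cmod (Mz a n))\<^sup>2"] by (simp add: Mz_def)

lemma Mz_funpow: "(Mz ^^ m) a = (\<lambda>n. if n < m then 0 else a (n - m))"
  by (induction m) (auto simp: Mz_def fun_eq_iff)

lemma Mz_funpow_H2: "a \<in> H2 \<Longrightarrow> (Mz ^^ m) a \<in> H2"
  by (induction m) (auto intro: Mz_H2)

lemma J_H2_H2: "a \<in> H2 \<Longrightarrow> J_H2 a \<in> H2"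
  by (simp add: J_H2_def H2_def)

lemma J_H2_J_H2 [simp]: "J_H2 (J_H2 a) = a"
  by (simp add: J_H2_def)

lemma J_H2_Mz: "J_H2 (Mz a) = Mz (J_H2 a)"
  by (auto simp: J_H2_def Mz_def)

lemma J_H2_add: "J_H2 (\<lambda>n. a n + b n) = (\<lambda>n. J_H2 a n + J_H2 b n)"
  by (simp add: J_H2_def)

lemma J_H2_cmult: "J_H2 (\<lambda>n. c * a n) = (\<lambda>n. cnj c * J_H2 a n)"
  by (simp add: J_H2_def)

lemma ball_H2_J_H2: "(\<forall>a\<in>H2. P (J_H2 a)) \<longleftrightarrow> (\<forall>a\<in>H2. P a)"
  by (metis J_H2_H2 J_H2_J_H2)

lemma h2_norm_nonneg: "a \<in> H2 \<Longrightarrow> 0 \<le> h2_norm a"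
  by (simp add: h2_norm_def H2_def suminf_nonneg)

lemma h2_norm_J_H2: "h2_norm (J_H2 a) = h2_norm a"
  by (simp add: h2_norm_def J_H2_def)

lemma square_summable_Cauchy_Schwarz:
  fixes f g :: "nat \<Rightarrow> real"
  assumes f: "summable (\<lambda>n. (f n)\<^sup>2)" and g: "summable (\<lambda>n. (g n)\<^sup>2)"
  shows "summable (\<lambda>n. \<bar>f n * g n\<bar>)"
    and "(\<Sum>n. \<bar>f n * g n\<bar>) \<le> sqrt (\<Sum>n. (f n)\<^sup>2) * sqrt (\<Sum>n. (g n)\<^sup>2)"
proof -
  have partial: "(\<Sum>n<N. \<bar>f n * g n\<bar>) \<le> sqrt (\<Sum>n. (f n)\<^sup>2) * sqrt (\<Sum>n. (g n)\<^sup>2)" for N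
  proof -
    have "(\<Sum>n<N. \<bar>f n\<bar> * \<bar>g n\<bar>)\<^sup>2 \<le> (\<Sum>n<N. \<bar>f n\<bar>\<^sup>2) * (\<Sum>n<N. \<bar>g n\<bar>\<^sup>2)"
      by (rule Cauchy_Schwarz_ineq_sum)
    also have "\<dots> \<le> (\<Sum>n. (f n)\<^sup>2) * (\<Sum>n. (g n)\<^sup>2)"
      using f g by (intro mult_mono sum_le_suminf sum_nonneg suminf_nonneg) (auto intro!: sum_le_suminf)
    finally show ?thesis
      by (simp add: abs_mult real_le_rsqrt flip: real_sqrt_mult)
  qed
  show summable: "summable (\<lambda>n. \<bar>f n * g n\<bar>)"
    by (rule summableI_nonneg_bounded[OF _ partial]) auto
  show "(\<Sum>n. \<bar>f n * g n\<bar>) \<le> sqrt (\<Sum>n. (f n)\<^sup>2) * sqrt (\<Sum>n. (g n)\<^sup>2)"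
    by (rule suminf_le_const[OF summable partial])
qed

lemma h2_norm_bound_max:
  assumes "\<forall>a\<in>H2. h2_norm (T a) \<le> K * h2_norm a" "a \<in> H2"
  shows "h2_norm (T a) \<le> max K 0 * h2_norm a"
proof -
  have "h2_norm (T a) \<le> K * h2_norm a"
    using assms by blast
  also have "\<dots> \<le> max K 0 * h2_norm a"
    using assms(2) by (intro mult_right_mono h2_norm_nonneg) auto
  finally show ?thesis .
qed

lemma bounded_linear_h2_comp:
  assumes U: "bounded_linear_h2 U" and T: "bounded_linear_h2 T"
  shows "bounded_linear_h2 (\<lambda>a. U (T a))"
proof -
  obtain KU KT where KU: "\<forall>a\<in>H2. h2_norm (U a) \<le> KU * h2_norm a"
    and KT: "\<forall>a\<in>H2. h2_norm (T a) \<le> KT * h2_norm a"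
    using U T unfolding bounded_linear_h2_def by blast
  have "h2_norm (U (T a)) \<le> (max KU 0 * max KT 0) * h2_norm a" if "a \<in> H2" for a
  proof -
    have "h2_norm (U (T a)) \<le> max KU 0 * h2_norm (T a)"
      using h2_norm_bound_max[OF KU] T that by (simp add: bounded_linear_h2_def)
    also have "\<dots> \<le> max KU 0 * (max KT 0 * h2_norm a)"
      using h2_norm_bound_max[OF KT that] by (intro mult_left_mono) auto
    finally show ?thesis by (simp add: mult.assoc)
  qed
  moreover have "U (T (\<lambda>n. a n + b n)) = (\<lambda>n. U (T a) n + U (T b) n)"
    and "U (T (\<lambda>n. c * a n)) = (\<lambda>n. c * U (T a) n)" if "a \<in> H2" "b \<in> H2" for a b c
    using U T that unfolding bounded_linear_h2_def by simp_all
  ultimately show ?thesis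
    using U T unfolding bounded_linear_h2_def by blast
qed

lemma bounded_antilinear_h2_comp_J_H2:
  assumes "bounded_antilinear_h2 X"
  shows "bounded_linear_h2 (\<lambda>a. X (J_H2 a))"
proof -
  obtain K where "\<forall>a\<in>H2. h2_norm (X a) \<le> K * h2_norm a"
    using assms unfolding bounded_antilinear_h2_def by blast
  then have "\<forall>a\<in>H2. h2_norm (X (J_H2 a)) \<le> K * h2_norm a"
    by (metis J_H2_H2 h2_norm_J_H2)
  then show ?thesis
    using assms unfolding bounded_antilinear_h2_def bounded_linear_h2_def
    by (auto simp: J_H2_H2 J_H2_add J_H2_cmult)
qed

lemma unitary_h2_H2: "unitary_h2 U \<Longrightarrow> a \<in> H2 \<Longrightarrow> U a \<in> H2"
  by (simp add: unitary_h2_def bounded_linear_h2_def)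

lemma unitary_h2_eq_adjoint_iff:
  assumes "unitary_h2 U" "a \<in> H2" "b \<in> H2"
  shows "a = h2_adjoint U b \<longleftrightarrow> U a = b"
  using assms unfolding unitary_h2_def by auto


definition conv :: "(nat \<Rightarrow> complex) \<Rightarrow> (nat \<Rightarrow> complex) \<Rightarrow> nat \<Rightarrow> complex" where
  "conv t a = (\<lambda>n. \<Sum>k\<le>n. t k * a (n - k))"

lemma M_theta_conv: "M_theta \<theta> = conv (taylor_coeff \<theta>)"
  by (simp add: fun_eq_iff M_theta_def conv_def)

lemma conv_commute: "conv a b = conv b a"
  unfolding conv_def fun_eq_iff atMost_atLeast0
  by (subst sum.atLeastAtMost_rev) (auto intro!: sum.cong simp: mult.commute)

lemma conv_Mz: "conv t (Mz a) = Mz (conv t a)"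
proof
  fix n
  show "conv t (Mz a) n = Mz (conv t a) n"
  proof (cases n)
    case (Suc m)
    have "conv t (Mz a) (Suc m) = (\<Sum>k\<le>m. t k * Mz a (Suc m - k)) + t (Suc m) * Mz a 0"
      by (simp add: conv_def)
    also have "(\<Sum>k\<le>m. t k * Mz a (Suc m - k)) = (\<Sum>k\<le>m. t k * a (m - k))"
      by (intro sum.cong) (auto simp: Mz_def Suc_diff_le)
    finally show ?thesis
      using Suc by (simp add: conv_def Mz_def)
  qed (simp add: conv_def Mz_def)
qed

lemma conv_powser_sums:
  assumes "summable (\<lambda>n. norm (a n * z ^ n))" "summable (\<lambda>n. norm (b n * z ^ n))"
  shows "(\<lambda>n. conv a b n * z ^ n) sums ((\<Sum>n. a n * z ^ n) * (\<Sum>n. b n * z ^ n))"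
proof -
  have "(\<Sum>i\<le>n. a i * z ^ i * (b (n - i) * z ^ (n - i))) = conv a b n * z ^ n" for n
    unfolding conv_def sum_distrib_right
    by (intro sum.cong refl) (simp add: mult_ac flip: power_add)
  with Cauchy_product_sums[OF assms] show ?thesis
    by simp
qed

section \<open>Power series of square-summable sequences\<close>

lemma sums_power2_norm_power:
  assumes "norm (z :: 'a :: real_normed_field) < 1"
  shows "(\<lambda>n. (norm z ^ n)\<^sup>2) sums (1 / (1 - (norm z)\<^sup>2))"
proof -
  have "(norm z)\<^sup>2 < 1"
    using assms by (simp add: abs_square_less_1)
  then have "(\<lambda>n. ((norm z)\<^sup>2) ^ n) sums (1 / (1 - (norm z)\<^sup>2))"
    by (intro geometric_sums) simp
  then show ?thesis
    by (simp add: mult.commute flip: power_mult)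
qed

lemma H2_summable_norm_powser:
  assumes "t \<in> H2" "norm z < 1"
  shows "summable (\<lambda>n. norm (t n * z ^ n))"
proof -
  have "summable (\<lambda>n. \<bar>cmod (t n) * norm z ^ n\<bar>)"
    using assms sums_summable[OF sums_power2_norm_power]
    by (intro square_summable_Cauchy_Schwarz(1)) (auto simp: H2_def)
  then show ?thesis
    by (simp add: norm_mult norm_power)
qed

lemma H2_eval_fps_norm_le:
  assumes t: "t \<in> H2" and z: "norm z < 1"
  shows "cmod (eval_fps (Abs_fps t) z) \<le> h2_norm t * sqrt (1 / (1 - (norm z)\<^sup>2))"
proof -
  have "cmod (eval_fps (Abs_fps t) z) \<le> (\<Sum>n. norm (t n * z ^ n))"
    unfolding eval_fps_def fps_nth_Abs_fps
    by (rule summable_norm[OF H2_summable_norm_powser[OF t z]])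
  also have "\<dots> = (\<Sum>n. \<bar>cmod (t n) * norm z ^ n\<bar>)"
    by (simp add: norm_mult norm_power)
  also have "\<dots> \<le> sqrt (\<Sum>n. (cmod (t n))\<^sup>2) * sqrt (\<Sum>n. (norm z ^ n)\<^sup>2)"
    using t sums_summable[OF sums_power2_norm_power[OF z]]
    by (intro square_summable_Cauchy_Schwarz(2)) (auto simp: H2_def)
  also have "\<dots> = h2_norm t * sqrt (1 / (1 - (norm z)\<^sup>2))"
    using sums_power2_norm_power[OF z] by (simp add: h2_norm_def sums_iff)
  finally show ?thesis .
qed

lemma H2_fps_conv_radius:
  assumes "t \<in> H2"
  shows "1 \<le> fps_conv_radius (Abs_fps t)"
  unfolding fps_conv_radius_def fps_nth_Abs_fps
proof (rule conv_radius_geI_ex')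
  fix r :: real
  assume "0 < r" "ereal r < 1"
  then show "summable (\<lambda>n. t n * of_real r ^ n)"
    using assms by (auto intro!: summable_norm_cancel[OF H2_summable_norm_powser])
qed

lemma H2_eval_fps_holomorphic:
  assumes "t \<in> H2"
  shows "eval_fps (Abs_fps t) holomorphic_on ball 0 1"
proof -
  have "eball 0 1 \<subseteq> eball 0 (fps_conv_radius (Abs_fps t))"
    by (rule eball_mono[OF H2_fps_conv_radius[OF assms]])
  then have "ball 0 1 \<subseteq> eball 0 (fps_conv_radius (Abs_fps t))"
    by (simp add: one_ereal_def)
  then show ?thesis
    by (rule holomorphic_on_eval_fps)
qed

lemma taylor_coeff_H2_eval_fps:
  assumes "t \<in> H2"
  shows "taylor_coeff (eval_fps (Abs_fps t)) = t"
proof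
  fix k
  have "(0 :: ereal) < 1"
    by simp
  also have "1 \<le> fps_conv_radius (Abs_fps t)"
    by (rule H2_fps_conv_radius[OF assms])
  finally have "eval_fps (Abs_fps t) has_fps_expansion Abs_fps t"
    by (rule eval_fps_has_fps_expansion)
  from fps_nth_fps_expansion[OF this, of k]
  show "taylor_coeff (eval_fps (Abs_fps t)) k = t k"
    unfolding taylor_coeff_def fps_nth_Abs_fps by (rule sym)
qed

lemma eval_fps_norm_le_conv_bound:
  assumes t: "t \<in> H2"
    and bound: "\<And>a. a \<in> H2 \<Longrightarrow> conv t a \<in> H2 \<and> h2_norm (conv t a) \<le> K * h2_norm a"
    and z: "norm z < 1"
  shows "cmod (eval_fps (Abs_fps t) z) \<le> K"
proof -
  define s where "s = 1 / (1 - (norm z)\<^sup>2)"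
  define k where "k = (\<lambda>n. cnj z ^ n)"
  \<comment> \<open>the Szego kernel at \<open>z\<close>: its power series at \<open>z\<close> sums to \<open>s = \<parallel>k\<parallel>\<^sup>2\<close>,
    so \<open>|\<theta> z| s = |(t * k)(z)| \<le> \<parallel>t * k\<parallel> sqrt s \<le> K s\<close>\<close>
  have s: "s > 0"
    using z by (simp add: s_def abs_square_less_1)
  have k_sq: "(\<lambda>n. (cmod (k n))\<^sup>2) sums s"
    using sums_power2_norm_power[OF z] by (simp add: k_def s_def norm_power)
  then have k: "k \<in> H2" "h2_norm k = sqrt s"
    by (auto simp: H2_def h2_norm_def sums_iff)
  have zz: "z * cnj z = complex_of_real ((norm z)\<^sup>2)"
    by (rule complex_norm_square[symmetric])
  have "(\<lambda>n. k n * z ^ n) = (\<lambda>n. (z * cnj z) ^ n)"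
    by (simp add: k_def fun_eq_iff power_mult_distrib mult.commute)
  moreover have "(\<lambda>n. (z * cnj z) ^ n) sums (1 / (1 - z * cnj z))"
    by (rule geometric_sums) (use z in \<open>simp add: zz norm_power power_less_one_iff\<close>)
  moreover have "1 / (1 - z * cnj z) = complex_of_real s"
    by (simp add: zz s_def)
  ultimately have k_at_z: "(\<lambda>n. k n * z ^ n) sums complex_of_real s"
    by simp
  have "(\<lambda>n. conv t k n * z ^ n) sums (eval_fps (Abs_fps t) z * complex_of_real s)"
    using conv_powser_sums[OF H2_summable_norm_powser[OF t z] H2_summable_norm_powser[OF k(1) z]]
      k_at_z by (simp add: eval_fps_def sums_iff)
  then have "cmod (eval_fps (Abs_fps t) z) * s = cmod (eval_fps (Abs_fps (conv t k)) z)"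
    using s by (simp add: eval_fps_def sums_iff norm_mult)
  also have "\<dots> \<le> h2_norm (conv t k) * sqrt s"
    using H2_eval_fps_norm_le[OF _ z] bound[OF k(1)] by (simp add: s_def)
  also have "\<dots> \<le> K * sqrt s * sqrt s"
    using bound[OF k(1)] k s by (intro mult_right_mono) auto
  also have "\<dots> = K * s"
    using s by (simp add: mult.assoc)
  finally show ?thesis
    using s by simp
qed

section \<open>Linear maps commuting with the shift\<close>

definition h2_one :: "nat \<Rightarrow> complex" where
  "h2_one = (\<lambda>n. if n = 0 then 1 else 0)"

lemma h2_one_H2: "h2_one \<in> H2"
  by (rule H2_finite_support[of 0]) (auto simp: h2_one_def)

locale Mz_commuting =
  fixes Y :: "(nat \<Rightarrow> complex) \<Rightarrow> nat \<Rightarrow> complex"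
  assumes maps_H2: "\<And>a. a \<in> H2 \<Longrightarrow> Y a \<in> H2"
    and add: "\<And>a b. a \<in> H2 \<Longrightarrow> b \<in> H2 \<Longrightarrow> Y (\<lambda>n. a n + b n) = (\<lambda>n. Y a n + Y b n)"
    and cmult: "\<And>a c. a \<in> H2 \<Longrightarrow> Y (\<lambda>n. c * a n) = (\<lambda>n. c * Y a n)"
    and commute_Mz: "\<And>a. a \<in> H2 \<Longrightarrow> Y (Mz a) = Mz (Y a)"
begin

lemma zero: "Y (\<lambda>n. 0) = (\<lambda>n. 0)"
  using cmult[OF H2_zero, of 0] by simp

lemma commute_Mz_funpow: "a \<in> H2 \<Longrightarrow> Y ((Mz ^^ m) a) = (Mz ^^ m) (Y a)"
  by (induction m) (auto simp: commute_Mz Mz_funpow_H2)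

lemma sum:
  assumes "finite F" "\<And>k. k \<in> F \<Longrightarrow> b k \<in> H2"
  shows "(\<lambda>n. \<Sum>k\<in>F. c k * b k n) \<in> H2 \<and> Y (\<lambda>n. \<Sum>k\<in>F. c k * b k n) = (\<lambda>n. \<Sum>k\<in>F. c k * Y (b k) n)"
  using assms
proof (induction F rule: finite_induct)
  case empty
  then show ?case
    using zero H2_zero by simp
next
  case (insert x F)
  then have "(\<lambda>n. c x * b x n) \<in> H2"
    by (simp add: H2_cmult)
  with insert show ?case
    by (simp add: add cmult H2_add)
qed

text \<open>
  Split \<open>a\<close> into its first \<open>n + 1\<close> coefficients plus \<open>M\<^sub>z\<^sup>n\<^sup>+\<^sup>1\<close> of a tail; by commutation,
  the image of the second part vanishes at index \<open>n\<close>.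
\<close>
lemma eq_conv:
  assumes a: "a \<in> H2"
  shows "Y a = conv (Y h2_one) a"
proof
  fix n
  define p where "p = (\<lambda>i. \<Sum>k\<le>n. a k * (Mz ^^ k) h2_one i)"
  define r where "r = (\<lambda>i. a (i + Suc n))"
  have r: "r \<in> H2"
    unfolding r_def by (rule H2_shift[OF a])
  have p: "p \<in> H2" "Y p = (\<lambda>i. \<Sum>k\<le>n. a k * Y ((Mz ^^ k) h2_one) i)"
    using sum[of "{..n}" "\<lambda>k. (Mz ^^ k) h2_one" a] Mz_funpow_H2[OF h2_one_H2]
    unfolding p_def by auto
  have "p i = (if i \<le> n then a i else 0)" for i
    unfolding p_def Mz_funpow h2_one_def by (simp add: if_distrib sum.delta cong: if_cong)
  then have "a = (\<lambda>i. p i + (Mz ^^ Suc n) r i)"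
    by (auto simp: fun_eq_iff Mz_funpow r_def simp del: funpow.simps)
  then have "Y a n = Y p n + Y ((Mz ^^ Suc n) r) n"
    using add[OF p(1) Mz_funpow_H2[OF r]] by metis
  also have "Y ((Mz ^^ Suc n) r) n = 0"
    using commute_Mz_funpow[OF r, of "Suc n"] by (simp add: Mz_funpow del: funpow.simps)
  also have "Y p n = (\<Sum>k\<le>n. a k * Y h2_one (n - k))"
    unfolding p(2) commute_Mz_funpow[OF h2_one_H2] unfolding Mz_funpow by (intro sum.cong) auto
  finally show "Y a n = conv (Y h2_one) a n"
    by (simp only: conv_commute[of "Y h2_one" a]) (simp add: conv_def)
qed

end

lemma Mz_commuting_eq_M_theta:
  assumes Y: "bounded_linear_h2 Y" and commute: "\<forall>a\<in>H2. Y (Mz a) = Mz (Y a)"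
  shows "\<exists>\<theta>\<in>H_infty. \<forall>a\<in>H2. Y a = M_theta \<theta> a"
proof -
  interpret Mz_commuting Y
    using Y commute by unfold_locales (auto simp: bounded_linear_h2_def)
  define t where "t = Y h2_one"
  define \<theta> where "\<theta> = eval_fps (Abs_fps t)"
  have t: "t \<in> H2"
    unfolding t_def by (rule maps_H2[OF h2_one_H2])
  obtain K where K: "\<forall>a\<in>H2. h2_norm (Y a) \<le> K * h2_norm a"
    using Y unfolding bounded_linear_h2_def by blast
  have "cmod (\<theta> z) \<le> K" if "z \<in> ball 0 1" for z
    unfolding \<theta>_def using K that eq_conv maps_H2
    by (intro eval_fps_norm_le_conv_bound[OF t]) (auto simp: t_def)
  then have "\<theta> \<in> H_infty"
    unfolding H_infty_def \<theta>_def bounded_iff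
    using H2_eval_fps_holomorphic[OF t] by blast
  moreover have "Y a = M_theta \<theta> a" if "a \<in> H2" for a
    unfolding \<theta>_def M_theta_conv taylor_coeff_H2_eval_fps[OF t]
    unfolding t_def by (rule eq_conv[OF that])
  ultimately show ?thesis
    by blast
qed


section \<open>Bounded analytic functions are multipliers\<close>

definition unit_root :: "nat \<Rightarrow> nat \<Rightarrow> complex" where
  "unit_root L j = cis (2 * pi * real j / real L)"

lemma norm_unit_root [simp]: "norm (unit_root L j) = 1"
  by (simp add: unit_root_def)

lemma sum_unit_root_orthogonal:
  assumes n: "n < L" and m: "m < L"
  shows "(\<Sum>j<L. unit_root L j ^ n * cnj (unit_root L j) ^ m) = (if n = m then of_nat L else 0)"
proof -
  define w where "w = cis (2 * pi * (real n - real m) / real L)"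
  have L: "0 < L"
    using n by simp
  have summand: "unit_root L j ^ n * cnj (unit_root L j) ^ m = w ^ j" for j
  proof -
    define x where "x = 2 * pi * real j / real L"
    have "unit_root L j ^ n * cnj (unit_root L j) ^ m = cis x ^ n * cis (- x) ^ m"
      by (simp add: unit_root_def x_def cis_cnj)
    also have "\<dots> = cis (real n * x) * cis (real m * - x)"
      by (simp only: Complex.DeMoivre)
    also have "\<dots> = cis (real j * (2 * pi * (real n - real m) / real L))"
      using L by (simp add: cis_mult x_def field_simps)
    finally show ?thesis
      by (simp add: w_def Complex.DeMoivre)
  qed
  show ?thesis
  proof (cases "n = m")
    case True
    then show ?thesis
      unfolding summand by (simp add: w_def)
  next
    case False
    have "w \<noteq> 1"
    proof
      assume "w = 1"
      then have "cos (2 * pi * (real n - real m) / real L) = 1"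
        unfolding w_def by (metis cis.sel(1) one_complex.simps(1))
      then obtain k :: int where "2 * pi * (real n - real m) / real L = real_of_int k * 2 * pi"
        by (auto simp: cos_one_2pi_int)
      then have "(real n - real m) * (2 * pi) = (real_of_int k * real L) * (2 * pi)"
        using L by (simp add: field_simps)
      then have k: "real n - real m = real_of_int k * real L"
        by simp
      have "\<bar>real n - real m\<bar> < real L"
        using n m by (auto simp: abs_if)
      then have "\<bar>real_of_int k\<bar> * real L < 1 * real L"
        by (simp add: k abs_mult)
      then have "\<bar>real_of_int k\<bar> < 1"
        using L by (simp only: mult_less_cancel_right)
      then have "k = 0"
        by linarith
      then show False
        using k False by simp
    qed
    moreover have "w ^ L = 1"
      using L by (simp add: w_def Complex.DeMoivre Ints_diff)
    ultimately show ?thesis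
      unfolding summand using False by (simp add: geometric_sum)
  qed
qed

lemma discrete_Parseval:
  assumes "0 < L"
  shows "(\<Sum>j<L. (cmod (\<Sum>n<L. g n * unit_root L j ^ n))\<^sup>2) = real L * (\<Sum>n<L. (cmod (g n))\<^sup>2)"
proof -
  have "complex_of_real (\<Sum>j<L. (cmod (\<Sum>n<L. g n * unit_root L j ^ n))\<^sup>2)
      = (\<Sum>j<L. (\<Sum>n<L. g n * unit_root L j ^ n) * cnj (\<Sum>m<L. g m * unit_root L j ^ m))"
    by (simp only: of_real_sum complex_norm_square)
  also have "\<dots> = (\<Sum>j<L. \<Sum>m<L. \<Sum>n<L. g n * cnj (g m) * (unit_root L j ^ n * cnj (unit_root L j) ^ m))"
    by (simp add: sum_distrib_left sum_distrib_right cnj_sum mult_ac)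
  also have "\<dots> = (\<Sum>m<L. \<Sum>j<L. \<Sum>n<L. g n * cnj (g m) * (unit_root L j ^ n * cnj (unit_root L j) ^ m))"
    by (rule sum.swap)
  also have "\<dots> = (\<Sum>m<L. \<Sum>n<L. \<Sum>j<L. g n * cnj (g m) * (unit_root L j ^ n * cnj (unit_root L j) ^ m))"
    by (intro sum.cong refl sum.swap)
  also have "\<dots> = (\<Sum>m<L. \<Sum>n<L. g n * cnj (g m) * (\<Sum>j<L. unit_root L j ^ n * cnj (unit_root L j) ^ m))"
    by (simp add: sum_distrib_left)
  also have "\<dots> = (\<Sum>m<L. g m * cnj (g m) * of_nat L)"
    by (simp add: sum_unit_root_orthogonal if_distrib sum.delta' cong: if_cong)
  also have "\<dots> = complex_of_real (real L * (\<Sum>n<L. (cmod (g n))\<^sup>2))"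
    unfolding of_real_mult of_real_sum complex_norm_square by (simp add: sum_distrib_left mult_ac)
  finally show ?thesis
    by (simp only: of_real_eq_iff)
qed

lemma conv_sum_le_of_circle_bound_finite:
  fixes c a :: "nat \<Rightarrow> complex"
  assumes c: "\<And>k. d < k \<Longrightarrow> c k = 0" and a: "\<And>n. D < n \<Longrightarrow> a n = 0"
    and bound: "\<And>w. norm w = 1 \<Longrightarrow> cmod (\<Sum>k\<le>d. c k * w ^ k) \<le> B"
  shows "(\<Sum>n\<le>d + D. (cmod (conv c a n))\<^sup>2) \<le> B\<^sup>2 * (\<Sum>n\<le>d + D. (cmod (a n))\<^sup>2)"
proof -
  define L where "L = Suc (d + D)"
  have L: "0 < L" "{..<L} = {..d + D}"
    by (auto simp: L_def)
  have prod: "(\<Sum>n<L. conv c a n * w ^ n) = (\<Sum>k\<le>d. c k * w ^ k) * (\<Sum>n<L. a n * w ^ n)" for w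
  proof -
    have "(\<Sum>n<L. a n * w ^ n) = (\<Sum>n\<le>D. a n * w ^ n)"
      by (rule sum.mono_neutral_right) (auto simp: L_def a)
    with polynomial_product[OF c a, where x = w] show ?thesis
      by (simp add: L(2) conv_def)
  qed
  have "real L * (\<Sum>n<L. (cmod (conv c a n))\<^sup>2)
      = (\<Sum>j<L. (cmod (\<Sum>n<L. conv c a n * unit_root L j ^ n))\<^sup>2)"
    by (rule discrete_Parseval[OF L(1), symmetric])
  also have "\<dots> \<le> (\<Sum>j<L. B\<^sup>2 * (cmod (\<Sum>n<L. a n * unit_root L j ^ n))\<^sup>2)"
  proof (rule sum_mono)
    fix j
    have "(cmod (\<Sum>k\<le>d. c k * unit_root L j ^ k))\<^sup>2 \<le> B\<^sup>2"
      using bound[OF norm_unit_root] by (intro power_mono) auto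
    then show "(cmod (\<Sum>n<L. conv c a n * unit_root L j ^ n))\<^sup>2
        \<le> B\<^sup>2 * (cmod (\<Sum>n<L. a n * unit_root L j ^ n))\<^sup>2"
      unfolding prod norm_mult power_mult_distrib by (intro mult_right_mono) auto
  qed
  also have "\<dots> = real L * (B\<^sup>2 * (\<Sum>n<L. (cmod (a n))\<^sup>2))"
    by (simp add: discrete_Parseval[OF L(1)] flip: sum_distrib_left)
  finally show ?thesis
    using L by simp
qed

lemma norm_partial_powser_le:
  fixes c :: "nat \<Rightarrow> complex"
  assumes c: "summable (\<lambda>k. cmod (c k))" and w: "norm w = 1"
  shows "cmod (\<Sum>k\<le>d. c k * w ^ k) \<le> cmod (\<Sum>k. c k * w ^ k) + (\<Sum>k. cmod (c (k + Suc d)))"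
proof -
  have norms: "norm (c k * w ^ k) = cmod (c k)" for k
    using w by (simp add: norm_mult norm_power)
  have summable: "summable (\<lambda>k. c k * w ^ k)"
    using c by (simp add: norms summable_norm_cancel[of "\<lambda>k. c k * w ^ k"])
  have "(\<Sum>k\<le>d. c k * w ^ k) = (\<Sum>k. c k * w ^ k) - (\<Sum>k. c (k + Suc d) * w ^ (k + Suc d))"
    using suminf_split_initial_segment[OF summable, of "Suc d"] by (simp add: lessThan_Suc_atMost)
  also have "cmod \<dots> \<le> cmod (\<Sum>k. c k * w ^ k) + cmod (\<Sum>k. c (k + Suc d) * w ^ (k + Suc d))"
    by (rule norm_triangle_ineq4)
  also have "cmod (\<Sum>k. c (k + Suc d) * w ^ (k + Suc d)) \<le> (\<Sum>k. cmod (c (k + Suc d)))"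
  proof -
    have "summable (\<lambda>k. norm (c (k + Suc d) * w ^ (k + Suc d)))"
      unfolding norms by (rule summable_ignore_initial_segment[OF c])
    from summable_norm[OF this] show ?thesis
      unfolding norms .
  qed
  finally show ?thesis
    by simp
qed

lemma conv_partial_sum_le_of_circle_bound:
  fixes c a :: "nat \<Rightarrow> complex"
  assumes c: "summable (\<lambda>k. cmod (c k))"
    and bound: "\<And>w. norm w = 1 \<Longrightarrow> cmod (\<Sum>k. c k * w ^ k) \<le> M"
    and a: "a \<in> H2"
  shows "(\<Sum>n<N. (cmod (conv c a n))\<^sup>2) \<le> M\<^sup>2 * (\<Sum>n. (cmod (a n))\<^sup>2)"
proof -
  define tail where "tail d = (\<Sum>k. cmod (c (k + Suc d)))" for d
  have "tail = (\<lambda>d. (\<Sum>k. cmod (c k)) - (\<Sum>k<Suc d. cmod (c k)))"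
  proof
    fix d
    show "tail d = (\<Sum>k. cmod (c k)) - (\<Sum>k<Suc d. cmod (c k))"
      using suminf_split_initial_segment[OF c, of "Suc d"] by (simp add: tail_def)
  qed
  moreover have "(\<lambda>d. (\<Sum>k. cmod (c k)) - (\<Sum>k<Suc d. cmod (c k)))
      \<longlonglongrightarrow> (\<Sum>k. cmod (c k)) - (\<Sum>k. cmod (c k))"
    by (intro tendsto_intros LIMSEQ_Suc[OF summable_LIMSEQ[OF c]])
  ultimately have tail: "tail \<longlonglongrightarrow> 0"
    by simp
  have "(\<Sum>n<N. (cmod (conv c a n))\<^sup>2) \<le> (M + tail d)\<^sup>2 * (\<Sum>n. (cmod (a n))\<^sup>2)" if "N \<le> d" for d
  proof -
    define c' where "c' k = (if k \<le> d then c k else 0)" for k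
    define a' where "a' n = (if n \<le> N then a n else 0)" for n
    have "cmod (\<Sum>k\<le>d. c' k * w ^ k) \<le> M + tail d" if "norm w = 1" for w
      using norm_partial_powser_le[OF c that, of d] bound[OF that] by (simp add: c'_def tail_def)
    then have "(\<Sum>n\<le>d + N. (cmod (conv c' a' n))\<^sup>2) \<le> (M + tail d)\<^sup>2 * (\<Sum>n\<le>d + N. (cmod (a' n))\<^sup>2)"
      by (intro conv_sum_le_of_circle_bound_finite) (auto simp: c'_def a'_def)
    moreover have "(\<Sum>n<N. (cmod (conv c a n))\<^sup>2) \<le> (\<Sum>n\<le>d + N. (cmod (conv c' a' n))\<^sup>2)"
    proof -
      have "conv c a n = conv c' a' n" if "n < N" for n
        using that \<open>N \<le> d\<close> unfolding conv_def by (intro sum.cong) (auto simp: c'_def a'_def)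
      then have "(\<Sum>n<N. (cmod (conv c a n))\<^sup>2) = (\<Sum>n<N. (cmod (conv c' a' n))\<^sup>2)"
        by simp
      also have "\<dots> \<le> (\<Sum>n\<le>d + N. (cmod (conv c' a' n))\<^sup>2)"
        by (rule sum_mono2) auto
      finally show ?thesis .
    qed
    moreover have "(\<Sum>n\<le>d + N. (cmod (a' n))\<^sup>2) \<le> (\<Sum>n. (cmod (a n))\<^sup>2)"
    proof -
      have "(\<Sum>n\<le>d + N. (cmod (a' n))\<^sup>2) \<le> (\<Sum>n\<le>d + N. (cmod (a n))\<^sup>2)"
        by (intro sum_mono) (simp add: a'_def)
      also have "\<dots> \<le> (\<Sum>n. (cmod (a n))\<^sup>2)"
        using a by (intro sum_le_suminf) (auto simp: H2_def)
      finally show ?thesis .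
    qed
    ultimately show ?thesis
      by (meson mult_left_mono order_trans zero_le_power2)
  qed
  moreover have "(\<lambda>d. (M + tail d)\<^sup>2 * (\<Sum>n. (cmod (a n))\<^sup>2)) \<longlonglongrightarrow> (M + 0)\<^sup>2 * (\<Sum>n. (cmod (a n))\<^sup>2)"
    by (intro tendsto_intros tail)
  ultimately show ?thesis
    using LIMSEQ_le_const by force
qed

lemma M_theta_partial_sum_le:
  assumes holo: "\<theta> holomorphic_on ball 0 1" and M: "\<And>z. z \<in> ball 0 1 \<Longrightarrow> cmod (\<theta> z) \<le> M"
    and a: "a \<in> H2"
  shows "(\<Sum>n<N. (cmod (M_theta \<theta> a n))\<^sup>2) \<le> M\<^sup>2 * (\<Sum>n. (cmod (a n))\<^sup>2)"
proof -
  define t where "t = taylor_coeff \<theta>"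
  define dilate where "dilate r = (\<lambda>k. t k * complex_of_real r ^ k)" for r :: real
  have sums: "(\<lambda>n. t n * z ^ n) sums \<theta> z" if "norm z < 1" for z
    using holomorphic_power_series[OF holo, of z] that by (simp add: t_def taylor_coeff_def)
  have dilate_bound: "(\<Sum>n<N. (cmod (conv (dilate r) a n))\<^sup>2) \<le> M\<^sup>2 * (\<Sum>n. (cmod (a n))\<^sup>2)"
    if r: "0 \<le> r" "r < 1" for r
  proof (rule conv_partial_sum_le_of_circle_bound[OF _ _ a])
    have "norm (complex_of_real ((1 + r) / 2)) < 1"
      using r by (simp only: norm_of_real) auto
    then have "summable (\<lambda>n. t n * complex_of_real ((1 + r) / 2) ^ n)"
      by (rule sums_summable[OF sums])
    moreover have "norm (complex_of_real r) < norm (complex_of_real ((1 + r) / 2))"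
      using r by (simp only: norm_of_real) auto
    ultimately have "summable (\<lambda>n. norm (t n * complex_of_real r ^ n))"
      by (rule powser_insidea)
    then show "summable (\<lambda>k. cmod (dilate r k))"
      by (simp add: dilate_def)
  next
    fix w :: complex
    assume w: "norm w = 1"
    then have "(\<lambda>k. dilate r k * w ^ k) sums \<theta> (complex_of_real r * w)"
      using sums[of "complex_of_real r * w"] r
      by (simp add: dilate_def norm_mult power_mult_distrib mult.assoc)
    then show "cmod (\<Sum>k. dilate r k * w ^ k) \<le> M"
      using M[of "complex_of_real r * w"] r w by (simp add: sums_iff norm_mult)
  qed
  define r where "r j = 1 + - inverse (real (Suc j))" for j
  have "(\<lambda>j. \<Sum>n<N. (cmod (conv (dilate (r j)) a n))\<^sup>2) \<longlonglongrightarrow> (\<Sum>n<N. (cmod (conv (dilate 1) a n))\<^sup>2)"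
    unfolding conv_def dilate_def r_def
    by (intro tendsto_intros LIMSEQ_inverse_real_of_nat_add_minus)
  moreover have "(\<Sum>n<N. (cmod (conv (dilate (r j)) a n))\<^sup>2) \<le> M\<^sup>2 * (\<Sum>n. (cmod (a n))\<^sup>2)" for j
    by (rule dilate_bound) (auto simp: r_def field_simps)
  ultimately have "(\<Sum>n<N. (cmod (conv (dilate 1) a n))\<^sup>2) \<le> M\<^sup>2 * (\<Sum>n. (cmod (a n))\<^sup>2)"
    by (intro LIMSEQ_le_const2) auto
  moreover have "conv (dilate 1) = M_theta \<theta>"
    by (simp add: dilate_def t_def M_theta_conv)
  ultimately show ?thesis
    by simp
qed

lemma M_theta_H2:
  assumes "\<theta> \<in> H_infty" "a \<in> H2"
  shows "M_theta \<theta> a \<in> H2"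
proof -
  obtain M where "\<And>z. z \<in> ball 0 1 \<Longrightarrow> cmod (\<theta> z) \<le> M"
    using assms(1) unfolding H_infty_def bounded_iff by blast
  then have "(\<Sum>n<N. (cmod (M_theta \<theta> a n))\<^sup>2) \<le> M\<^sup>2 * (\<Sum>n. (cmod (a n))\<^sup>2)" for N
    using assms by (intro M_theta_partial_sum_le) (auto simp: H_infty_def)
  then show ?thesis
    unfolding H2_def mem_Collect_eq by (rule summableI_nonneg_bounded[rotated]) simp
qed

lemma bounded_linear_h2_commute_Mz_iff:
  assumes "bounded_linear_h2 Y"
  shows "(\<forall>a\<in>H2. Y (Mz a) = Mz (Y a)) \<longleftrightarrow> (\<exists>\<theta>\<in>H_infty. \<forall>a\<in>H2. Y a = M_theta \<theta> a)"
proof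
  show "\<exists>\<theta>\<in>H_infty. \<forall>a\<in>H2. Y a = M_theta \<theta> a" if "\<forall>a\<in>H2. Y (Mz a) = Mz (Y a)"
    by (rule Mz_commuting_eq_M_theta[OF assms that])
  show "\<forall>a\<in>H2. Y (Mz a) = Mz (Y a)" if "\<exists>\<theta>\<in>H_infty. \<forall>a\<in>H2. Y a = M_theta \<theta> a"
    using that by (auto simp: Mz_H2 M_theta_conv conv_Mz)
qed

theorem proposition10p3:
  assumes X: "bounded_antilinear_h2 X"
    and S: "unilateral_shift_h2 S"
    and U: "unitary_h2 U"
    and SU: "\<forall>a\<in>H2. S a = h2_adjoint U (Mz (U a))"
  shows "(\<forall>a\<in>H2. X (Mz a) = S (X a)) \<longleftrightarrow>
         (\<exists>\<theta>\<in>H_infty. \<forall>a\<in>H2. X a = h2_adjoint U (M_theta \<theta> (J_H2 a)))"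
proof -
  define Y where "Y = (\<lambda>a. U (X (J_H2 a)))"
  have Y: "bounded_linear_h2 Y"
    unfolding Y_def using U unfolding unitary_h2_def
    by (blast intro: bounded_linear_h2_comp[OF _ bounded_antilinear_h2_comp_J_H2[OF X]])
  have X_H2: "X a \<in> H2" if "a \<in> H2" for a
    using X that by (simp add: bounded_antilinear_h2_def)
  have "X (Mz a) = S (X a) \<longleftrightarrow> U (X (Mz a)) = Mz (U (X a))" if "a \<in> H2" for a
    using SU X_H2[OF that] unitary_h2_eq_adjoint_iff[OF U X_H2[OF Mz_H2[OF that]]]
      Mz_H2[OF unitary_h2_H2[OF U X_H2[OF that]]] by simp
  then have "(\<forall>a\<in>H2. X (Mz a) = S (X a)) \<longleftrightarrow> (\<forall>a\<in>H2. U (X (Mz a)) = Mz (U (X a)))"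
    by blast
  also have "\<dots> \<longleftrightarrow> (\<forall>a\<in>H2. Y (Mz a) = Mz (Y a))"
    using ball_H2_J_H2[of "\<lambda>a. U (X (Mz a)) = Mz (U (X a))"] by (simp add: Y_def J_H2_Mz)
  also have "\<dots> \<longleftrightarrow> (\<exists>\<theta>\<in>H_infty. \<forall>a\<in>H2. Y a = M_theta \<theta> a)"
    by (rule bounded_linear_h2_commute_Mz_iff[OF Y])
  also have "\<dots> \<longleftrightarrow> (\<exists>\<theta>\<in>H_infty. \<forall>a\<in>H2. X a = h2_adjoint U (M_theta \<theta> (J_H2 a)))"
  proof (rule bex_cong[OF refl])
    fix \<theta>
    assume \<theta>: "\<theta> \<in> H_infty"
    have "Y (J_H2 a) = M_theta \<theta> (J_H2 a) \<longleftrightarrow> X a = h2_adjoint U (M_theta \<theta> (J_H2 a))"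
      if "a \<in> H2" for a
      using unitary_h2_eq_adjoint_iff[OF U X_H2[OF that] M_theta_H2[OF \<theta> J_H2_H2[OF that]]]
      by (simp add: Y_def)
    then show "(\<forall>a\<in>H2. Y a = M_theta \<theta> a) \<longleftrightarrow> (\<forall>a\<in>H2. X a = h2_adjoint U (M_theta \<theta> (J_H2 a)))"
      using ball_H2_J_H2[of "\<lambda>a. Y a = M_theta \<theta> a"] by blast
  qed
  finally show ?thesis .
qed

end
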